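(* Let $X$ be a normed space and let $Y$ be a topological vector space ordered by a closed convex pointed cone $K$. Let $\alpha:\mathbb{R}_+\to\mathbb{R}_+$ be nondecreasing with $\lim_{t\to0^+}\alpha(t)/t=0$. Let $A\subset X$ be convex, $k_0\in K\setminus\{0\}$, and let $F:X\to Y$ be strongly $\alpha(\cdot)$-$k_0$ paraconvex on $A$ with constant $C\ge0$. Let $x_0\in A$ and $h\in X$ with $\|h\|=1$ be such that there is $\delta_0>0$ with $x_0+th\in A$ for all $t\in(-\delta_0,\delta_0)$. Define, for $0<t<\delta_0$, $$\phi(t):=\frac{F(x_0+th)-F(x_0)}{t}+C\,\frac{\alpha(t)}{t}\,k_0.$$ Then there exist $b\in Y$ and $\delta>0$ such that $\phi(t)-b\in K$ for all $0<t<\delta$.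
   Context: A cone $K$ is pointed if $K\cap(-K)=\{0\}$. For a convex cone $K\subset Y$, write $x\le_K y$ iff $y-x\in K$. A mapping $F:X\to Y$ is strongly $\alpha(\cdot)$-$k_0$ paraconvex on a convex set $A\subset X$ with constant $C\ge0$ (where $k_0\in K$) if for all $x_1,x_2\in A$ and all $\lambda\in[0,1]$, $$F(\lambda x_1+(1-\lambda)x_2)\le_K \lambda F(x_1)+(1-\lambda)F(x_2)+C\min\{\lambda,1-\lambda\}\,\alpha(\|x_1-x_2\|)\,k_0.$$ *)

theory Defs
  imports "HOL-Analysis.Analysis"
begin

text \<open>Real topological vector spaces: vector addition and scalar multiplication are
  jointly continuous (no separation axiom assumed).\<close>
class topological_real_vector = real_vector + topological_monoid_add +
  assumes tendsto_scaleR_Pair_tvs: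
    "LIM x (nhds (c::real) \<times>\<^sub>F nhds a). fst x *\<^sub>R snd x :> nhds (c *\<^sub>R a)"

definition pointed_cone :: "'a::real_vector set \<Rightarrow> bool" where
  "pointed_cone K \<longleftrightarrow> K \<inter> uminus ` K = {0}"

definition cone_le :: "'a::real_vector set \<Rightarrow> 'a \<Rightarrow> 'a \<Rightarrow> bool" where
  "cone_le K x y \<longleftrightarrow> y - x \<in> K"

definition strongly_paraconvex ::
  "('a::real_normed_vector \<Rightarrow> 'b::real_vector) \<Rightarrow> 'b set \<Rightarrow> (real \<Rightarrow> real) \<Rightarrow> 'b \<Rightarrow> real \<Rightarrow> 'a set \<Rightarrow> bool"
where
  "strongly_paraconvex F K \<alpha> k0 C A \<longleftrightarrow>
     (\<forall>x1\<in>A. \<forall>x2\<in>A. \<forall>l\<in>{0..1}.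
        cone_le K (F (l *\<^sub>R x1 + (1 - l) *\<^sub>R x2))
          (l *\<^sub>R F x1 + (1 - l) *\<^sub>R F x2 + (C * min l (1 - l) * \<alpha> (norm (x1 - x2))) *\<^sub>R k0))"

end

theory Submission
  imports Defs
begin

text \<open>Write \<open>x\<^sub>0\<close> as a convex combination of \<open>x\<^sub>0 + t h\<close> and \<open>x\<^sub>0 - s h\<close>. Paraconvexity at
  these three collinear points bounds the forward difference quotient at \<open>t\<close> from below by
  minus the backward one at \<open>s\<close>, up to a multiple of \<open>k\<^sub>0\<close> of size \<open>C \<alpha>(s + t)/s\<close> when
  \<open>t < s\<close>. Fixing \<open>s\<close> and using monotonicity of \<open>\<alpha>\<close> gives a lower bound \<open>b\<close> uniform in
  \<open>t \<in> (0, s)\<close>.\<close>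

lemma strongly_paraconvex_slope_sum:
  fixes F :: "'a::real_normed_vector \<Rightarrow> 'b::real_vector"
  assumes para: "strongly_paraconvex F K \<alpha> k0 C A" and K_cone: "cone K"
    and fwd: "x0 + t *\<^sub>R h \<in> A" and bwd: "x0 - s *\<^sub>R h \<in> A"
    and s: "s > 0" and t: "t > 0"
  shows "(1 / t) *\<^sub>R (F (x0 + t *\<^sub>R h) - F x0) + (1 / s) *\<^sub>R (F (x0 - s *\<^sub>R h) - F x0)
           + (C * \<alpha> ((s + t) * norm h) / max s t) *\<^sub>R k0 \<in> K"
proof -
  define l where "l = s / (s + t)"
  have l: "l \<in> {0..1}" and one_minus_l: "1 - l = t / (s + t)"
    using s t by (auto simp: l_def field_simps)
  have combination: "l *\<^sub>R (x0 + t *\<^sub>R h) + (1 - l) *\<^sub>R (x0 - s *\<^sub>R h) = x0"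
  proof -
    have "l *\<^sub>R (x0 + t *\<^sub>R h) + (1 - l) *\<^sub>R (x0 - s *\<^sub>R h) = x0 + (l * t - (1 - l) * s) *\<^sub>R h"
      by (simp add: algebra_simps)
    moreover have "l * t - (1 - l) * s = 0" using s t by (simp add: one_minus_l l_def field_simps)
    ultimately show ?thesis by simp
  qed
  have dist: "norm ((x0 + t *\<^sub>R h) - (x0 - s *\<^sub>R h)) = (s + t) * norm h"
    using s t by (simp add: algebra_simps flip: scaleR_add_left)
  define m where "m = C * min l (1 - l) * \<alpha> ((s + t) * norm h)"
  have "l *\<^sub>R F (x0 + t *\<^sub>R h) + (1 - l) *\<^sub>R F (x0 - s *\<^sub>R h) + m *\<^sub>R k0 - F x0 \<in> K"
    using para fwd bwd l unfolding strongly_paraconvex_def cone_le_def m_def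
    by (metis combination dist)
  moreover define q where "q = (s + t) / (s * t)"
  ultimately have scaled: "q *\<^sub>R (l *\<^sub>R F (x0 + t *\<^sub>R h) + (1 - l) *\<^sub>R F (x0 - s *\<^sub>R h) + m *\<^sub>R k0 - F x0) \<in> K"
    using K_cone s t unfolding cone_def q_def by simp
  have weights: "q * l = 1 / t" "q * (1 - l) = 1 / s" "q = 1 / t + 1 / s"
    using s t by (simp_all only: q_def l_def one_minus_l) (simp_all add: divide_simps)
  have correction: "q * m = C * \<alpha> ((s + t) * norm h) / max s t"
  proof -
    have "min l (1 - l) = min s t / (s + t)"
      using s t unfolding one_minus_l by (simp add: l_def min_def divide_le_cancel)
    then have "q * min l (1 - l) = 1 / max s t"
      using s t by (simp add: q_def min_def max_def)
    then show ?thesis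
      unfolding m_def by (metis mult.commute mult.left_commute times_divide_eq_right mult.right_neutral)
  qed
  have "q *\<^sub>R (l *\<^sub>R F (x0 + t *\<^sub>R h) + (1 - l) *\<^sub>R F (x0 - s *\<^sub>R h) + m *\<^sub>R k0 - F x0)
      = (q * l) *\<^sub>R F (x0 + t *\<^sub>R h) + (q * (1 - l)) *\<^sub>R F (x0 - s *\<^sub>R h) + (q * m) *\<^sub>R k0 - q *\<^sub>R F x0"
    by (simp add: algebra_simps)
  also have "\<dots> = (1 / t) *\<^sub>R (F (x0 + t *\<^sub>R h) - F x0) + (1 / s) *\<^sub>R (F (x0 - s *\<^sub>R h) - F x0)
           + (C * \<alpha> ((s + t) * norm h) / max s t) *\<^sub>R k0"
    unfolding weights(1,2) correction unfolding weights(3) by (simp add: algebra_simps)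
  finally show ?thesis using scaled by simp
qed

lemma strongly_paraconvex_difference_quotient_lower_bound:
  fixes F :: "'a::real_normed_vector \<Rightarrow> 'b::real_vector"
  assumes K_convex: "convex K" and K_cone: "cone K"
    and \<alpha>_nonneg: "\<forall>t\<ge>0. \<alpha> t \<ge> 0" and \<alpha>_mono: "mono_on {0..} \<alpha>"
    and k0: "k0 \<in> K" and C: "C \<ge> 0"
    and para: "strongly_paraconvex F K \<alpha> k0 C A" and h: "norm h = 1"
    and fwd: "x0 + t *\<^sub>R h \<in> A" and bwd: "x0 - s *\<^sub>R h \<in> A"
    and t: "0 < t" "t < s"
  shows "((1 / t) *\<^sub>R (F (x0 + t *\<^sub>R h) - F x0) + (C * (\<alpha> t / t)) *\<^sub>R k0)
           - (- (1 / s) *\<^sub>R (F (x0 - s *\<^sub>R h) - F x0) - (C * \<alpha> (2 * s) / s) *\<^sub>R k0) \<in> K"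
proof -
  have slopes: "(1 / t) *\<^sub>R (F (x0 + t *\<^sub>R h) - F x0) + (1 / s) *\<^sub>R (F (x0 - s *\<^sub>R h) - F x0)
      + (C * \<alpha> (s + t) / s) *\<^sub>R k0 \<in> K"
    using strongly_paraconvex_slope_sum[OF para K_cone fwd bwd] t h by (simp add: max_def)
  have "\<alpha> (s + t) \<le> \<alpha> (2 * s)"
    using t by (intro mono_onD[OF \<alpha>_mono]) auto
  then have "C * \<alpha> (s + t) / s \<le> C * \<alpha> (2 * s) / s"
    using C t by (simp add: divide_right_mono mult_left_mono)
  moreover have "0 \<le> C * (\<alpha> t / t)" using C \<alpha>_nonneg t by simp
  ultimately have "(C * (\<alpha> t / t) + C * \<alpha> (2 * s) / s - C * \<alpha> (s + t) / s) *\<^sub>R k0 \<in> K"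
    using K_cone k0 unfolding cone_def by simp
  with slopes have "(1 / t) *\<^sub>R (F (x0 + t *\<^sub>R h) - F x0) + (1 / s) *\<^sub>R (F (x0 - s *\<^sub>R h) - F x0)
      + (C * \<alpha> (s + t) / s) *\<^sub>R k0
      + (C * (\<alpha> t / t) + C * \<alpha> (2 * s) / s - C * \<alpha> (s + t) / s) *\<^sub>R k0 \<in> K"
    using K_convex K_cone convex_cone by blast
  then show ?thesis by (simp add: algebra_simps)
qed

theorem proposition3p2:
  fixes F :: "'a::real_normed_vector \<Rightarrow> 'b::topological_real_vector"
    and K :: "'b set" and \<alpha> :: "real \<Rightarrow> real" and A :: "'a set"
    and k0 :: 'b and C :: real and x0 h :: 'a and \<delta>0 :: real
  assumes K_closed: "closed K" and K_convex: "convex K" and K_cone: "cone K"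
    and K_pointed: "pointed_cone K"
    and \<alpha>_nonneg: "\<forall>t\<ge>0. \<alpha> t \<ge> 0"
    and \<alpha>_mono: "mono_on {0..} \<alpha>"
    and \<alpha>_lim: "((\<lambda>t. \<alpha> t / t) \<longlongrightarrow> 0) (at_right 0)"
    and A_convex: "convex A"
    and k0: "k0 \<in> K - {0}"
    and C: "C \<ge> 0"
    and para: "strongly_paraconvex F K \<alpha> k0 C A"
    and x0: "x0 \<in> A" and h: "norm h = 1"
    and \<delta>0: "\<delta>0 > 0" and line: "\<forall>t. -\<delta>0 < t \<and> t < \<delta>0 \<longrightarrow> x0 + t *\<^sub>R h \<in> A"
  shows "\<exists>b \<delta>. \<delta> > 0 \<and> \<delta> \<le> \<delta>0 \<and>
           (\<forall>t. 0 < t \<and> t < \<delta> \<longrightarrow>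
              ((1 / t) *\<^sub>R (F (x0 + t *\<^sub>R h) - F x0) + (C * (\<alpha> t / t)) *\<^sub>R k0) - b \<in> K)"
proof -
  define s where "s = \<delta>0 / 2"
  have s: "0 < s" "s < \<delta>0" using \<delta>0 by (auto simp: s_def)
  have "((1 / t) *\<^sub>R (F (x0 + t *\<^sub>R h) - F x0) + (C * (\<alpha> t / t)) *\<^sub>R k0)
          - (- (1 / s) *\<^sub>R (F (x0 - s *\<^sub>R h) - F x0) - (C * \<alpha> (2 * s) / s) *\<^sub>R k0) \<in> K"
    if "0 < t" "t < s" for t
  proof (rule strongly_paraconvex_difference_quotient_lower_bound
      [OF K_convex K_cone \<alpha>_nonneg \<alpha>_mono _ C para h _ _ that])
    show "k0 \<in> K" using k0 by blast
    show "x0 + t *\<^sub>R h \<in> A" "x0 - s *\<^sub>R h \<in> A"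
      using line[rule_format, of t] line[rule_format, of "-s"] s that by auto
  qed
  then show ?thesis using s by (intro exI conjI) auto
qed

end
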